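(* Let $G=(V,E)$ be a connected, locally finite graph with edge weights $w_{xy}\ge w_{min}>0$ for all $xy\in E$ and with $\mu\le\mu_{max}$ on $V$. Suppose $u:(0,\infty)\times V\to(0,\infty)$ is $C^1$ in time and satisfies $$\partial_t(\log u)\ge\Psi_\Upsilon(\log u)-\eta(t)\quad\text{on }(0,\infty)\times V,$$ where $\eta:(0,\infty)\to[0,\infty)$ is continuous. Then for any $0<t_1<t_2$ and $x_1,x_2\in V$, $$u(t_1,x_1)\le u(t_2,x_2)\exp\Big(\int_{t_1}^{t_2}\eta(t)\,dt+\frac{2\mu_{max}\,d(x_1,x_2)^2}{w_{min}(t_2-t_1)}\Big),$$ where $d$ is the combinatorial graph distance.
   Context: Graphs are undirected; $x\sim y$ means $xy\in E$; $w_{xy}=w_{yx}>0$; $\mu:V\to(0,\infty)$. For $H:\mathbb R\to\mathbb R$ and $v:V\to\mathbb R$, $\Psi_H(v)(x)=\frac1{\mu(x)}\sum_{y\sim x}w_{xy}H(v(y)-v(x))$, and $\Upsilon(z)=e^z-1-z$. *)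

theory Defs
  imports "HOL-Analysis.Analysis"
begin

definition Ups :: "real \<Rightarrow> real" where
  "Ups z = exp z - 1 - z"

definition Psi :: "('a \<Rightarrow> 'a \<Rightarrow> bool) \<Rightarrow> ('a \<Rightarrow> 'a \<Rightarrow> real) \<Rightarrow> ('a \<Rightarrow> real)
    \<Rightarrow> (real \<Rightarrow> real) \<Rightarrow> ('a \<Rightarrow> real) \<Rightarrow> 'a \<Rightarrow> real" where
  "Psi E w \<mu> H v x = (1 / \<mu> x) * (\<Sum>y\<in>{y. E x y}. w x y * H (v y - v x))"

definition is_walk :: "('a \<Rightarrow> 'a \<Rightarrow> bool) \<Rightarrow> nat \<Rightarrow> (nat \<Rightarrow> 'a) \<Rightarrow> 'a \<Rightarrow> 'a \<Rightarrow> bool" where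
  "is_walk E n p x y \<longleftrightarrow> p 0 = x \<and> p n = y \<and> (\<forall>i<n. E (p i) (p (Suc i)))"

definition connected_graph :: "('a \<Rightarrow> 'a \<Rightarrow> bool) \<Rightarrow> bool" where
  "connected_graph E \<longleftrightarrow> (\<forall>x y. \<exists>n p. is_walk E n p x y)"

definition locally_finite :: "('a \<Rightarrow> 'a \<Rightarrow> bool) \<Rightarrow> bool" where
  "locally_finite E \<longleftrightarrow> (\<forall>x. finite {y. E x y})"

definition gdist :: "('a \<Rightarrow> 'a \<Rightarrow> bool) \<Rightarrow> 'a \<Rightarrow> 'a \<Rightarrow> nat" where
  "gdist E x y = (LEAST n. \<exists>p. is_walk E n p x y)"

definition C1_on :: "real set \<Rightarrow> (real \<Rightarrow> real) \<Rightarrow> bool" where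
  "C1_on S f \<longleftrightarrow> (\<exists>f'. (\<forall>t\<in>S. (f has_real_derivative f' t) (at t)) \<and> continuous_on S f')"

end

theory Submission
  imports Defs
begin

text \<open>Writing \<open>v = log u\<close>, the hypothesis says \<open>\<partial>\<^sub>t v \<ge> \<Psi>\<^sub>\<Upsilon>(v) - \<eta>\<close>. Since \<open>\<Upsilon> \<ge> 0\<close>,
each \<open>v(\<cdot>, x)\<close> decreases at most like \<open>\<integral>\<eta>\<close>; along an edge \<open>x \<sim> y\<close> moreover
\<open>\<partial>\<^sub>t v(\<cdot>, y) \<ge> c \<Upsilon>(v(\<cdot>, x) - v(\<cdot>, y)) - \<eta>\<close> with \<open>c = w\<^sub>m\<^sub>i\<^sub>n / \<mu>\<^sub>m\<^sub>a\<^sub>x\<close>. As long as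
\<open>v(t\<^sub>1, x)\<close> exceeds \<open>v(t, y)\<close> (corrected by \<open>\<integral>\<eta>\<close>) by \<open>G > 0\<close>, the bound \<open>\<Upsilon>(z) \<ge> z\<^sup>2/2\<close>
gives the Riccati inequality \<open>G' \<le> -c G\<^sup>2/2\<close>, so the excess has dropped below \<open>2/(c \<tau>)\<close> after
time \<open>\<tau>\<close>. Chaining this along a shortest path of length \<open>n\<close>, with the time interval split
into \<open>n\<close> equal parts, gives the total cost \<open>n \<cdot> 2n/(c T) = 2n\<^sup>2/(c T)\<close>.\<close>

lemma Ups_nonneg: "Ups z \<ge> 0"
  unfolding Ups_def using exp_ge_add_one_self[of z] by linarith

lemma Ups_ge_half_square: "z \<ge> 0 \<Longrightarrow> Ups z \<ge> z\<^sup>2 / 2"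
  unfolding Ups_def using exp_lower_Taylor_quadratic[of z] by simp

lemma integral_has_real_derivative_interior:
  assumes "continuous_on {a..b} g" and "a < t" and "t < b"
  shows "((\<lambda>x. integral {a..x} g) has_real_derivative g t) (at t)"
  using integral_has_real_derivative[OF assms(1), of t] assms(2,3)
  by (simp add: at_within_Icc_at)

lemma continuous_on_integral_Icc:
  "continuous_on {a..b} g \<Longrightarrow> continuous_on {a..b} (\<lambda>x. integral {a..x} g)"
  for g :: "real \<Rightarrow> real"
  by (intro indefinite_integral_continuous_1 integrable_continuous_interval)

lemma ln_differentiable_of_C1:
  assumes "C1_on S f" and "t \<in> S" and "f t > 0"
  shows "(\<lambda>s. ln (f s)) differentiable (at t)"
proof -
  obtain f' where "(f has_real_derivative f' t) (at t)"
    using assms(1,2) unfolding C1_on_def by blast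
  then have "((\<lambda>s. ln (f s)) has_real_derivative f' t / f t) (at t)"
    using assms(3) by (auto intro!: derivative_eq_intros)
  then show ?thesis unfolding real_differentiable_def by blast
qed

lemma le_add_integral_of_deriv_ge:
  fixes X X' \<eta> :: "real \<Rightarrow> real"
  assumes "a \<le> b" and "continuous_on {a..b} X" and "continuous_on {a..b} \<eta>"
    and "\<And>t. a < t \<Longrightarrow> t < b \<Longrightarrow> (X has_real_derivative X' t) (at t)"
    and "\<And>t. a < t \<Longrightarrow> t < b \<Longrightarrow> - \<eta> t \<le> X' t"
  shows "X a \<le> X b + integral {a..b} \<eta>"
proof -
  have "X a + integral {a..a} \<eta> \<le> X b + integral {a..b} \<eta>"
  proof (rule DERIV_nonneg_imp_increasing_open[OF \<open>a \<le> b\<close>])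
    fix t assume "a < t" "t < b"
    then show "\<exists>y. ((\<lambda>s. X s + integral {a..s} \<eta>) has_real_derivative y) (at t) \<and> 0 \<le> y"
      using assms(4,5)[of t] integral_has_real_derivative_interior[OF assms(3)]
      by (intro exI[of _ "X' t + \<eta> t"]) (auto intro: DERIV_add)
  qed (use assms(2,3) continuous_on_integral_Icc in \<open>auto intro!: continuous_intros\<close>)
  then show ?thesis by simp
qed

lemma riccati_bound:
  fixes G G' :: "real \<Rightarrow> real"
  assumes "a < b" and "c > 0" and "continuous_on {a..b} G"
    and "\<And>t. t \<in> {a..b} \<Longrightarrow> G t > 0"
    and "\<And>t. a < t \<Longrightarrow> t < b \<Longrightarrow> (G has_real_derivative G' t) (at t)"
    and "\<And>t. a < t \<Longrightarrow> t < b \<Longrightarrow> G' t \<le> - c * (G t)\<^sup>2 / 2"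
  shows "G b < 2 / (c * (b - a))"
proof -
  define K where "K t = inverse (G t) - c * t / 2" for t
  have "K a \<le> K b"
  proof (rule DERIV_nonneg_imp_increasing_open[of a b K])
    show "continuous_on {a..b} K"
      unfolding K_def using assms(3,4) by (intro continuous_intros) force+
    fix t assume t: "a < t" "t < b"
    have Gt: "G t > 0" using assms(4) t by simp
    have "(K has_real_derivative - (G' t * inverse ((G t)\<^sup>2)) - c / 2) (at t)"
      unfolding K_def using assms(5)[OF t] Gt
      by (auto intro!: derivative_eq_intros simp: power2_eq_square)
    moreover have "- (G' t * inverse ((G t)\<^sup>2)) = - G' t / (G t)\<^sup>2"
      unfolding divide_inverse by simp
    moreover have "c / 2 \<le> - G' t / (G t)\<^sup>2"
    proof -
      have "0 < (G t)\<^sup>2" using Gt by simp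
      moreover have "c / 2 * (G t)\<^sup>2 \<le> - G' t" using assms(6)[OF t] by simp
      ultimately show ?thesis by (simp only: pos_le_divide_eq)
    qed
    ultimately show "\<exists>y. (K has_real_derivative y) (at t) \<and> 0 \<le> y"
      by (intro exI conjI) auto
  qed (use assms(1) in simp)
  moreover have "0 < inverse (G a)" and "c * (b - a) / 2 = c * b / 2 - c * a / 2"
    using assms(4)[of a] assms(1) by (auto simp: field_simps)
  ultimately have "c * (b - a) / 2 < inverse (G b)"
    unfolding K_def by linarith
  moreover have "0 < c * (b - a) / 2" using assms(1,2) by simp
  ultimately have "inverse (inverse (G b)) < inverse (c * (b - a) / 2)"
    by (rule less_imp_inverse_less)
  then show ?thesis by (simp add: inverse_eq_divide)
qed

lemma harnack_edge_ode:
  fixes X Y X' Y' \<eta> :: "real \<Rightarrow> real"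
  assumes ab: "a < b" and c: "c > 0"
    and cX: "continuous_on {a..b} X" and cY: "continuous_on {a..b} Y"
    and c\<eta>: "continuous_on {a..b} \<eta>"
    and dX: "\<And>t. a < t \<Longrightarrow> t < b \<Longrightarrow> (X has_real_derivative X' t) (at t)"
    and dY: "\<And>t. a < t \<Longrightarrow> t < b \<Longrightarrow> (Y has_real_derivative Y' t) (at t)"
    and X': "\<And>t. a < t \<Longrightarrow> t < b \<Longrightarrow> - \<eta> t \<le> X' t"
    and Y': "\<And>t. a < t \<Longrightarrow> t < b \<Longrightarrow> c * Ups (X t - Y t) - \<eta> t \<le> Y' t"
  shows "X a \<le> Y b + integral {a..b} \<eta> + 2 / (c * (b - a))"
proof -
  define G where "G t = X a - Y t - integral {a..t} \<eta>" for t
  have G_le: "G t \<le> X t - Y t" if t: "t \<in> {a..b}" for t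
  proof -
    have "X a \<le> X t + integral {a..t} \<eta>"
      using t by (intro le_add_integral_of_deriv_ge[where X' = X'] dX X'
          continuous_on_subset[OF cX] continuous_on_subset[OF c\<eta>]) auto
    then show ?thesis unfolding G_def by simp
  qed
  have cG: "continuous_on {a..b} G"
    unfolding G_def using cY continuous_on_integral_Icc[OF c\<eta>] by (intro continuous_intros)
  have dG: "(G has_real_derivative - Y' t - \<eta> t) (at t)" if "a < t" "t < b" for t
    unfolding G_def using dY[OF that] integral_has_real_derivative_interior[OF c\<eta> that]
    by (auto intro!: derivative_eq_intros)
  have G': "- Y' t - \<eta> t \<le> - c * Ups (X t - Y t)" if "a < t" "t < b" for t
    using Y'[OF that] by simp
  show ?thesis
  proof (cases "G b \<le> 0")
    case True
    moreover have "0 < 2 / (c * (b - a))" using ab c by simp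
    ultimately show ?thesis unfolding G_def by linarith
  next
    case False
    have "G b \<le> G t" if t: "t \<in> {a..b}" for t
    proof (rule DERIV_nonpos_imp_decreasing_open[of t b G])
      show "continuous_on {t..b} G" using t by (intro continuous_on_subset[OF cG]) auto
      fix s assume "t < s" "s < b"
      then have s: "a < s" "s < b" using t by auto
      have "- c * Ups (X s - Y s) \<le> 0" using c Ups_nonneg by simp
      then show "\<exists>y. (G has_real_derivative y) (at s) \<and> y \<le> 0"
        using dG[OF s] G'[OF s] by (intro exI conjI) auto
    qed (use t in auto)
    then have Gpos: "G t > 0" if "t \<in> {a..b}" for t using False that by force
    have "G b < 2 / (c * (b - a))"
    proof (rule riccati_bound[OF ab c cG Gpos dG])
      fix t assume t: "a < t" "t < b"
      then have "0 < G t" "G t \<le> X t - Y t" using Gpos G_le by auto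
      then have "c * (G t)\<^sup>2 / 2 \<le> c * ((X t - Y t)\<^sup>2 / 2)"
        using c by (simp add: power_mono)
      also have "\<dots> \<le> c * Ups (X t - Y t)"
        using Ups_ge_half_square[of "X t - Y t"] \<open>0 < G t\<close> \<open>G t \<le> X t - Y t\<close> c by simp
      finally show "- Y' t - \<eta> t \<le> - c * (G t)\<^sup>2 / 2" using G'[OF t] by linarith
    qed auto
    then show ?thesis unfolding G_def by simp
  qed
qed

lemma Psi_nonneg:
  assumes "\<mu> x > 0" and "\<And>y. E x y \<Longrightarrow> 0 \<le> w x y" and "\<And>z. 0 \<le> H z"
  shows "0 \<le> Psi E w \<mu> H v x"
  unfolding Psi_def using assms by (intro mult_nonneg_nonneg sum_nonneg) auto

lemma Psi_ge_edge:
  assumes "finite {y. E x y}" and "\<mu> x > 0" and "\<And>y. E x y \<Longrightarrow> 0 \<le> w x y"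
    and "\<And>z. 0 \<le> H z" and "E x y"
  shows "w x y / \<mu> x * H (v y - v x) \<le> Psi E w \<mu> H v x"
proof -
  have "w x y * H (v y - v x) \<le> (\<Sum>z\<in>{y. E x y}. w x z * H (v z - v x))"
    using assms by (intro member_le_sum) auto
  then have "1 / \<mu> x * (w x y * H (v y - v x)) \<le> Psi E w \<mu> H v x"
    unfolding Psi_def using assms(2) by (intro mult_left_mono) auto
  then show ?thesis by simp
qed

lemma Psi_Ups_ge_edge:
  assumes "locally_finite E" and "E x y"
    and "wmin > 0" and "\<And>x y. E x y \<Longrightarrow> wmin \<le> w x y"
    and "\<mu> x > 0" and "\<mu> x \<le> \<mu>max"
  shows "wmin / \<mu>max * Ups (v y - v x) \<le> Psi E w \<mu> Ups v x"
proof -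
  have "wmin / \<mu>max \<le> w x y / \<mu> x"
    using assms(2-6) by (intro frac_le) (auto intro: order_trans[OF less_imp_le])
  then have "wmin / \<mu>max * Ups (v y - v x) \<le> w x y / \<mu> x * Ups (v y - v x)"
    by (rule mult_right_mono) (rule Ups_nonneg)
  also have "\<dots> \<le> Psi E w \<mu> Ups v x"
    using assms by (intro Psi_ge_edge Ups_nonneg)
      (auto simp: locally_finite_def intro: order_trans[OF less_imp_le])
  finally show ?thesis .
qed

lemma split_quadratic_cost:
  fixes K T :: real and n :: nat
  assumes "T > 0" and "n > 0"
  shows "K * (real n)\<^sup>2 / (T * real n / (real n + 1)) + K / (T / (real n + 1))
    = K * (real (Suc n))\<^sup>2 / T"
  using assms by (simp add: field_simps power2_eq_square)

lemma harnack_along_walk: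
  fixes v :: "real \<Rightarrow> 'a \<Rightarrow> real" and \<eta> :: "real \<Rightarrow> real"
  assumes \<eta>: "continuous_on {0<..} \<eta>"
    and stay: "\<And>x s t. 0 < s \<Longrightarrow> s < t \<Longrightarrow> v s x \<le> v t x + integral {s..t} \<eta>"
    and edge: "\<And>x y s t. E x y \<Longrightarrow> 0 < s \<Longrightarrow> s < t \<Longrightarrow>
      v s x \<le> v t y + integral {s..t} \<eta> + K / (t - s)"
    and walk: "is_walk E n p x y" and ta: "0 < ta" and tab: "ta < tb"
  shows "v ta x \<le> v tb y + integral {ta..tb} \<eta> + K * (real n)\<^sup>2 / (tb - ta)"
  using walk tab
proof (induction n arbitrary: y tb)
  case 0
  then have "y = x" unfolding is_walk_def by auto
  with stay[OF ta "0.prems"(2)] show ?case by simp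
next
  case (Suc n)
  have walk: "is_walk E n p x (p n)" and e: "E (p n) y"
    using Suc.prems(1) unfolding is_walk_def by auto
  show ?case
  proof (cases "n = 0")
    case True
    then have "p n = x" using walk unfolding is_walk_def by simp
    with edge[OF e ta Suc.prems(2)] True show ?thesis by simp
  next
    case False
    \<comment> \<open>the first \<open>n\<close> steps get the fraction \<open>n/(n+1)\<close> of the time, i.e. equal shares per edge\<close>
    define s where "s = ta + (tb - ta) * real n / (real n + 1)"
    have s_ta: "s - ta = (tb - ta) * real n / (real n + 1)"
      and tb_s: "tb - s = (tb - ta) / (real n + 1)"
      unfolding s_def by (simp_all add: field_simps)
    have "0 < s - ta" "0 < tb - s"
      unfolding s_ta tb_s using False Suc.prems(2) by simp_all
    then have s: "ta < s" "s < tb" by simp_all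
    have "v ta x \<le> v s (p n) + integral {ta..s} \<eta> + K * (real n)\<^sup>2 / (s - ta)"
      using Suc.IH[OF walk s(1)] .
    moreover have "v s (p n) \<le> v tb y + integral {s..tb} \<eta> + K / (tb - s)"
      using edge[OF e _ s(2)] ta s(1) by simp
    moreover have "integral {ta..s} \<eta> + integral {s..tb} \<eta> = integral {ta..tb} \<eta>"
      using s ta by (intro Henstock_Kurzweil_Integration.integral_combine
          integrable_continuous_interval continuous_on_subset[OF \<eta>]) auto
    moreover have "K * (real n)\<^sup>2 / (s - ta) + K / (tb - s)
        = K * (real (Suc n))\<^sup>2 / (tb - ta)"
      unfolding s_ta tb_s using split_quadratic_cost[of "tb - ta" n K] False Suc.prems(2)
      by simp
    ultimately show ?thesis by linarith
  qed
qed

lemma gdist_is_walk: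
  assumes "connected_graph E"
  obtains p where "is_walk E (gdist E x y) p x y"
proof -
  obtain n p where "is_walk E n p x y" using assms unfolding connected_graph_def by blast
  then have "\<exists>p. is_walk E (gdist E x y) p x y"
    unfolding gdist_def by (intro LeastI_ex[where P = "\<lambda>n. \<exists>p. is_walk E n p x y"]) blast
  then show thesis using that by blast
qed

lemma harnack_of_differential_inequality:
  fixes v :: "real \<Rightarrow> 'a \<Rightarrow> real" and \<eta> :: "real \<Rightarrow> real"
  assumes c: "c > 0" and \<eta>: "continuous_on {0<..} \<eta>"
    and diff: "\<And>x t. 0 < t \<Longrightarrow> (\<lambda>s. v s x) differentiable (at t)"
    and vertex: "\<And>x t. 0 < t \<Longrightarrow> - \<eta> t \<le> deriv (\<lambda>s. v s x) t"
    and edge: "\<And>x y t. E x y \<Longrightarrow> 0 < t \<Longrightarrow>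
      c * Ups (v t x - v t y) - \<eta> t \<le> deriv (\<lambda>s. v s y) t"
    and walk: "is_walk E n p x y" and ta: "0 < ta" and tab: "ta < tb"
  shows "v ta x \<le> v tb y + integral {ta..tb} \<eta> + 2 * (real n)\<^sup>2 / (c * (tb - ta))"
proof -
  have dv: "((\<lambda>s. v s x) has_real_derivative deriv (\<lambda>s. v s x) t) (at t)" if "0 < t" for x t
    using diff[OF that] DERIV_deriv_iff_real_differentiable by blast
  have cv: "continuous_on {s..t} (\<lambda>r. v r x)" if "0 < s" for s t x
    using that by (intro continuous_at_imp_continuous_on ballI DERIV_isCont[OF dv]) auto
  have c\<eta>: "continuous_on {s..t} \<eta>" if "0 < s" for s t
    using that by (intro continuous_on_subset[OF \<eta>]) auto
  have "v ta x \<le> v tb y + integral {ta..tb} \<eta> + 2 / c * (real n)\<^sup>2 / (tb - ta)"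
  proof (rule harnack_along_walk[OF \<eta> _ _ walk ta tab])
    fix x and s t :: real assume "0 < s" "s < t"
    then show "v s x \<le> v t x + integral {s..t} \<eta>"
      by (intro le_add_integral_of_deriv_ge[OF _ cv c\<eta> dv vertex]) auto
  next
    fix x y and s t :: real assume xy: "E x y" and st: "0 < s" "s < t"
    then have "v s x \<le> v t y + integral {s..t} \<eta> + 2 / (c * (t - s))"
      by (intro harnack_edge_ode[OF st(2) c cv cv c\<eta> dv dv vertex edge]) auto
    then show "v s x \<le> v t y + integral {s..t} \<eta> + 2 / c / (t - s)"
      by simp
  qed
  then show ?thesis by simp
qed

theorem theorem6p1:
  fixes E :: "'a \<Rightarrow> 'a \<Rightarrow> bool" and w :: "'a \<Rightarrow> 'a \<Rightarrow> real" and \<mu> :: "'a \<Rightarrow> real"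
    and u :: "real \<Rightarrow> 'a \<Rightarrow> real" and \<eta> :: "real \<Rightarrow> real"
    and wmin \<mu>max t1 t2 :: real and x1 x2 :: 'a
  assumes sym: "\<And>x y. E x y \<Longrightarrow> E y x"
    and conn: "connected_graph E"
    and lf: "locally_finite E"
    and wsym: "\<And>x y. E x y \<Longrightarrow> w x y = w y x"
    and wmin_pos: "wmin > 0"
    and wmin: "\<And>x y. E x y \<Longrightarrow> w x y \<ge> wmin"
    and mu_pos: "\<And>x. \<mu> x > 0"
    and mu_max: "\<And>x. \<mu> x \<le> \<mu>max"
    and u_pos: "\<And>t x. t > 0 \<Longrightarrow> u t x > 0"
    and u_C1: "\<And>x. C1_on {0<..} (\<lambda>t. u t x)"
    and eta_nonneg: "\<And>t. t > 0 \<Longrightarrow> \<eta> t \<ge> 0"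
    and eta_cont: "continuous_on {0<..} \<eta>"
    and ineq: "\<And>t x. t > 0 \<Longrightarrow>
       deriv (\<lambda>s. ln (u s x)) t \<ge> Psi E w \<mu> Ups (\<lambda>y. ln (u t y)) x - \<eta> t"
    and t1: "0 < t1" and t12: "t1 < t2"
  shows "u t1 x1 \<le> u t2 x2 * exp (integral {t1..t2} \<eta>
           + 2 * \<mu>max * (real (gdist E x1 x2))^2 / (wmin * (t2 - t1)))"
proof -
  define v where "v t x = ln (u t x)" for t x
  have "\<mu>max > 0" using mu_pos[of x1] mu_max[of x1] by linarith
  have w_nonneg: "0 \<le> w x y" if "E x y" for x y using wmin[OF that] wmin_pos by linarith
  have Psi_lower: "Psi E w \<mu> Ups (v t) x - \<eta> t \<le> deriv (\<lambda>s. v s x) t" if "0 < t" for t x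
    using ineq[OF that] unfolding v_def by simp
  obtain p where walk: "is_walk E (gdist E x1 x2) p x1 x2" using gdist_is_walk[OF conn] .
  have "v t1 x1 \<le> v t2 x2 + integral {t1..t2} \<eta>
      + 2 * (real (gdist E x1 x2))\<^sup>2 / (wmin / \<mu>max * (t2 - t1))"
  proof (rule harnack_of_differential_inequality[OF _ eta_cont _ _ _ walk t1 t12])
    show "0 < wmin / \<mu>max" using wmin_pos \<open>\<mu>max > 0\<close> by simp
    show "(\<lambda>s. v s x) differentiable (at t)" if "0 < t" for x t
      unfolding v_def using ln_differentiable_of_C1[OF u_C1] u_pos that by simp
    show "- \<eta> t \<le> deriv (\<lambda>s. v s x) t" if "0 < t" for x t
      using Psi_lower[OF that, of x] Psi_nonneg[of \<mu> x E w Ups "v t", OF mu_pos w_nonneg Ups_nonneg]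
      by linarith
    show "wmin / \<mu>max * Ups (v t x - v t y) - \<eta> t \<le> deriv (\<lambda>s. v s y) t"
      if "E x y" "0 < t" for x y t
    proof -
      have "wmin / \<mu>max * Ups (v t x - v t y) \<le> Psi E w \<mu> Ups (v t) y"
        by (rule Psi_Ups_ge_edge[where v = "v t"])
          (use lf sym[OF that(1)] wmin_pos wmin mu_pos mu_max in auto)
      then show ?thesis using Psi_lower[OF that(2), of y] by linarith
    qed
  qed
  then have "ln (u t1 x1) \<le> ln (u t2 x2) + (integral {t1..t2} \<eta>
      + 2 * \<mu>max * (real (gdist E x1 x2))\<^sup>2 / (wmin * (t2 - t1)))"
    unfolding v_def using \<open>\<mu>max > 0\<close> by (simp add: field_simps)
  moreover have "0 < u t1 x1" "0 < u t2 x2" using u_pos t1 t12 by simp_all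
  ultimately show ?thesis by (subst ln_le_cancel_iff[symmetric]) (simp_all add: ln_mult)
qed

end
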